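(* Let $(N_m)_{m\ge 0}$ be positive integers with $N_0=N$, and for each $m\ge1$ let $W_m:\mathbb{R}^{N_{m-1}}\to\mathbb{C}^{N_m}$ be linear with $W_m^*W_m=\mathrm{Id}$. Let $X$ be a random vector in $\mathbb{R}^N$ with $E(\|X\|^2)<\infty$ and let $(X_m)_{m\ge0}$ be its expected scattering layers. Then for every $M>0$, $$\lim_{m\to\infty}E\big(\|X_m\|\,\mathbf{1}_{\|X\|\le M}\big)=0.$$
   Context: For $z\in\mathbb{C}^n$, $|z|$ denotes the vector of coordinatewise complex moduli; $\|\cdot\|$ is the Euclidean norm. Expected scattering layers: $X_0=X$ and $X_{m+1}=|W_{m+1}(X_m-E(X_m))|\in\mathbb{R}^{N_{m+1}}$ for $m\ge0$. *)

theory Defs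
  imports "HOL-Probability.Probability"
begin

text \<open>Vectors of R^n / C^n are represented as functions on nat; only the
coordinates below the dimension matter. A linear map W : R^p -> C^q is given by its
complex q x p matrix (entries W i j, i < q, j < p).\<close>

definition vnorm :: "nat \<Rightarrow> (nat \<Rightarrow> real) \<Rightarrow> real" where
  "vnorm n x = sqrt (\<Sum>j<n. (x j)^2)"

definition apply_lin :: "(nat \<Rightarrow> nat \<Rightarrow> complex) \<Rightarrow> nat \<Rightarrow> (nat \<Rightarrow> real) \<Rightarrow> (nat \<Rightarrow> complex)" where
  "apply_lin A p x = (\<lambda>i. \<Sum>j<p. A i j * complex_of_real (x j))"

text \<open>Adjoint of the real-linear map R^p -> C^q (w.r.t. the real inner products
on R^p and on C^q = R^(2q), i.e. Re of the Hermitian product): C^q -> R^p.\<close>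
definition adj_lin :: "(nat \<Rightarrow> nat \<Rightarrow> complex) \<Rightarrow> nat \<Rightarrow> (nat \<Rightarrow> complex) \<Rightarrow> (nat \<Rightarrow> real)" where
  "adj_lin A q z = (\<lambda>j. Re (\<Sum>i<q. cnj (A i j) * z i))"

fun scat :: "'a measure \<Rightarrow> (nat \<Rightarrow> nat) \<Rightarrow> (nat \<Rightarrow> nat \<Rightarrow> nat \<Rightarrow> complex)
              \<Rightarrow> ('a \<Rightarrow> nat \<Rightarrow> real) \<Rightarrow> nat \<Rightarrow> 'a \<Rightarrow> nat \<Rightarrow> real" where
  "scat M N W X 0 = X"
| "scat M N W X (Suc m) = (\<lambda>\<omega> i.
     if i < N (Suc m) then
       cmod (apply_lin (W (Suc m)) (N m)
               (\<lambda>j. scat M N W X m \<omega> j - integral\<^sup>L M (\<lambda>\<eta>. scat M N W X m \<eta> j)) i)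
     else 0)"

end

theory Submission
  imports Defs
begin

text \<open>
  Let E_m(w) = |X_m(w)|^2 and c_m = |E(X_m)|^2. Since W_{m+1} is an isometry,
  E_{m+1}(w) = |X_m(w) - E(X_m)|^2, so E(E_{m+1}) = E(E_m) - c_m and the series of the c_m
  converges. Each layer is a 1-Lipschitz function of X, and from m = 1 on it is nonnegative,
  so 2 <X_m(w), X_m(v)> >= E_m(w) - |X(w) - X(v)|^2. Averaging over v gives
  E_{m+1}(w) <= E_m(w) - p_e(w) max (E_m(w) - e) 0 + c_m, where p_e(w) is the probability
  that X lies within distance sqrt e of X(w). For almost every w all the p_e(w) are positive,
  so E_m(w) tends to 0 almost surely. On the event |X| <= B the energies are uniformly
  bounded, and dominated convergence concludes.
\<close>

lemma apply_lin_diff: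
  "apply_lin A p x i - apply_lin A p y i = apply_lin A p (\<lambda>j. x j - y j) i"
  by (simp add: apply_lin_def sum_subtractf[symmetric] algebra_simps)

lemma sum_cmod_apply_lin_sq:
  assumes adj: "\<And>x j. j < p \<Longrightarrow> adj_lin A q (apply_lin A p x) j = x j"
  shows "(\<Sum>i<q. (cmod (apply_lin A p x i))^2) = (\<Sum>j<p. (x j)^2)"
proof -
  let ?z = "apply_lin A p x"
  have "complex_of_real (\<Sum>i<q. (cmod (?z i))^2) = (\<Sum>i<q. cnj (?z i) * ?z i)"
    unfolding of_real_sum complex_norm_square by (simp add: mult.commute)
  also have "\<dots> = (\<Sum>j<p. complex_of_real (x j) * (\<Sum>i<q. cnj (A i j) * ?z i))"
    by (simp add: apply_lin_def sum_distrib_left sum_distrib_right mult_ac sum.swap[of _ "{..<q}"])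
  finally have "(\<Sum>i<q. (cmod (?z i))^2)
      = Re (\<Sum>j<p. complex_of_real (x j) * (\<Sum>i<q. cnj (A i j) * ?z i))"
    by (metis Re_complex_of_real)
  also have "\<dots> = (\<Sum>j<p. x j * adj_lin A q ?z j)"
    by (simp add: adj_lin_def)
  also have "\<dots> = (\<Sum>j<p. (x j)^2)"
    using adj by (simp add: power2_eq_square)
  finally show ?thesis .
qed

lemma sum_sq_diff_cmod_apply_lin_le:
  assumes adj: "\<And>x j. j < p \<Longrightarrow> adj_lin A q (apply_lin A p x) j = x j"
  shows "(\<Sum>i<q. (cmod (apply_lin A p x i) - cmod (apply_lin A p y i))^2) \<le> (\<Sum>j<p. (x j - y j)^2)"
proof -
  have "(\<Sum>i<q. (cmod (apply_lin A p x i) - cmod (apply_lin A p y i))^2)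
        \<le> (\<Sum>i<q. (cmod (apply_lin A p (\<lambda>j. x j - y j) i))^2)"
    by (intro sum_mono) (metis apply_lin_diff abs_le_square_iff abs_norm_cancel norm_triangle_ineq3)
  also have "\<dots> = (\<Sum>j<p. (x j - y j)^2)"
    by (rule sum_cmod_apply_lin_sq[OF adj])
  finally show ?thesis .
qed

lemma tendsto_zero_of_perturbed_contraction:
  fixes v c :: "nat \<Rightarrow> real"
  assumes v: "\<And>m. 0 \<le> v m" and c: "c \<longlonglongrightarrow> 0" and p: "0 < p" "p \<le> 1"
    and step: "eventually (\<lambda>m. v (Suc m) \<le> (1 - p) * v m + c m) sequentially"
  shows "v \<longlonglongrightarrow> 0"
proof (rule order_tendstoI)
  show "eventually (\<lambda>m. a < v m) sequentially" if "a < 0" for a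
    using that v by (intro always_eventually allI) (rule less_le_trans)
  fix r :: real assume r: "0 < r"
  define \<delta> where "\<delta> = r / 2"
  have "eventually (\<lambda>m. c m < p * \<delta>) sequentially"
    using c p r by (intro order_tendstoD) (auto simp: \<delta>_def)
  with step have "eventually (\<lambda>m. v (Suc m) - \<delta> \<le> (1 - p) * (v m - \<delta>)) sequentially"
    by eventually_elim (simp add: algebra_simps)
  then obtain K where K: "\<And>m. m \<ge> K \<Longrightarrow> v (Suc m) - \<delta> \<le> (1 - p) * (v m - \<delta>)"
    by (auto simp: eventually_sequentially)
  have geometric: "v (n + K) - \<delta> \<le> (1 - p)^n * (v K - \<delta>)" for n
  proof (induction n)
    case (Suc n)
    have "v (Suc n + K) - \<delta> \<le> (1 - p) * (v (n + K) - \<delta>)"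
      using K[of "n + K"] by simp
    also have "\<dots> \<le> (1 - p) * ((1 - p)^n * (v K - \<delta>))"
      using Suc p by (intro mult_left_mono) auto
    finally show ?case by simp
  qed simp
  have "(\<lambda>n. (1 - p)^n * (v K - \<delta>)) \<longlonglongrightarrow> 0 * (v K - \<delta>)"
    using p by (intro tendsto_mult LIMSEQ_power_zero tendsto_const) auto
  then have "eventually (\<lambda>n. (1 - p)^n * (v K - \<delta>) < \<delta>) sequentially"
    using r by (intro order_tendstoD) (auto simp: \<delta>_def)
  then have "eventually (\<lambda>n. v (n + K) < r) sequentially"
  proof eventually_elim
    case (elim n)
    then show ?case
      using geometric[of n] unfolding \<delta>_def by linarith
  qed
  then show "eventually (\<lambda>m. v m < r) sequentially"
    by (rule eventually_sequentially_seg[THEN iffD1])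
qed

lemma (in prob_space) AE_prob_fiber_pos:
  fixes q :: "'a \<Rightarrow> 'b::countable"
  assumes fiber: "\<And>l. {\<eta>\<in>space M. q \<eta> = l} \<in> sets M"
  shows "AE \<omega> in M. prob {\<eta>\<in>space M. q \<eta> = q \<omega>} > 0"
proof (rule AE_I')
  show "(\<Union>l\<in>{l. prob {\<eta>\<in>space M. q \<eta> = l} = 0}. {\<eta>\<in>space M. q \<eta> = l}) \<in> null_sets M"
    by (intro null_sets_UN') (auto intro: fiber simp: emeasure_eq_measure)
qed (auto simp: not_less dest: antisym[OF _ measure_nonneg])

lemma (in prob_space) AE_prob_sqdist_le_pos:
  fixes f :: "'a \<Rightarrow> nat \<Rightarrow> real"
  assumes meas: "\<And>j. j < n \<Longrightarrow> (\<lambda>\<omega>. f \<omega> j) \<in> borel_measurable M"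
  shows "AE \<omega> in M. \<forall>e>0. prob {\<eta>\<in>space M. (\<Sum>j<n. (f \<omega> j - f \<eta> j)^2) \<le> e} > 0"
proof -
  define S where "S \<omega> e = {\<eta>\<in>space M. (\<Sum>j<n. (f \<omega> j - f \<eta> j)^2) \<le> e}" for \<omega> e
  have S_sets: "S \<omega> e \<in> sets M" for \<omega> e
    unfolding S_def using meas by measurable
  have "AE \<omega> in M. prob (S \<omega> e) > 0" if e: "e > 0" for e
  proof -
    define h where "h = sqrt (e / (n + 1))"
    have h: "h > 0" "h^2 = e / (n + 1)"
      using e by (auto simp: h_def)
    \<comment> \<open>q \<omega> indexes the cube of side h containing f \<omega>; such cubes have squared diameter below e.\<close>
    define q where "q \<omega> = map (\<lambda>j. \<lfloor>f \<omega> j / h\<rfloor>) [0..<n]" for \<omega>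
    have "{\<eta>\<in>space M. q \<eta> = l} \<in> sets M" for l
    proof (cases "length l = n")
      case True
      then have "{\<eta>\<in>space M. q \<eta> = l} = {\<eta>\<in>space M. \<forall>j\<in>{..<n}. \<lfloor>f \<eta> j / h\<rfloor> = l ! j}"
        by (auto simp: q_def list_eq_iff_nth_eq)
      also have "\<dots> \<in> sets M"
        using meas by (intro sets.sets_Collect_finite_All) (measurable, auto)
      finally show ?thesis .
    next
      case False
      then have "{\<eta>\<in>space M. q \<eta> = l} = {}"
        by (auto simp: q_def)
      then show ?thesis
        by (metis sets.empty_sets)
    qed
    then have "AE \<omega> in M. prob {\<eta>\<in>space M. q \<eta> = q \<omega>} > 0"
      by (rule AE_prob_fiber_pos)
    moreover have fiber_sub: "{\<eta>\<in>space M. q \<eta> = q \<omega>} \<subseteq> S \<omega> e" for \<omega>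
    proof safe
      fix \<eta> assume \<eta>: "\<eta> \<in> space M" and "q \<eta> = q \<omega>"
      then have same_floor: "\<lfloor>f \<eta> j / h\<rfloor> = \<lfloor>f \<omega> j / h\<rfloor>" if "j < n" for j
        using that by (auto simp: q_def list_eq_iff_nth_eq)
      have "\<bar>f \<omega> j / h - f \<eta> j / h\<bar> < 1" if "j < n" for j
        using same_floor[OF that] by linarith
      then have "\<bar>f \<omega> j - f \<eta> j\<bar> < h" if "j < n" for j
        using that h by (simp add: diff_divide_distrib[symmetric] field_simps)
      then have "(\<Sum>j<n. (f \<omega> j - f \<eta> j)^2) \<le> (\<Sum>j<n. e / (n + 1))"
        using h by (intro sum_mono) (metis abs_le_square_iff less_imp_le lessThan_iff abs_of_pos)
      also have "\<dots> \<le> e"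
        using e by (simp add: field_simps)
      finally show "\<eta> \<in> S \<omega> e"
        using \<eta> by (simp add: S_def)
    qed
    ultimately show ?thesis
      by (elim AE_mp) (rule AE_I2, auto intro: less_le_trans[OF _ finite_measure_mono] S_sets)
  qed
  then have "AE \<omega> in M. \<forall>k. prob (S \<omega> (1 / Suc k)) > 0"
    by (simp add: AE_all_countable)
  then show ?thesis
    unfolding S_def[symmetric]
  proof eventually_elim
    case (elim \<omega>)
    show ?case
    proof (intro allI impI)
      fix e :: real assume "e > 0"
      then obtain k where "1 / Suc k < e"
        by (metis inverse_eq_divide reals_Archimedean)
      then have "S \<omega> (1 / Suc k) \<subseteq> S \<omega> e"
        by (auto simp: S_def)
      with elim show "prob (S \<omega> e) > 0"
        by (meson S_sets finite_measure_mono less_le_trans)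
    qed
  qed
qed

lemma diff_square_le: "((a::real) - b)^2 \<le> 2 * a^2 + 2 * b^2"
  using zero_le_power2[of "a + b"] by (simp add: power2_eq_square algebra_simps)

locale expected_scattering = prob_space M for M :: "'a measure" +
  fixes N :: "nat \<Rightarrow> nat" and W :: "nat \<Rightarrow> nat \<Rightarrow> nat \<Rightarrow> complex" and X :: "'a \<Rightarrow> nat \<Rightarrow> real"
  assumes isometry: "\<And>m x j. j < N m \<Longrightarrow>
      adj_lin (W (Suc m)) (N (Suc m)) (apply_lin (W (Suc m)) (N m) x) j = x j"
    and borel_measurable_input: "\<And>j. j < N 0 \<Longrightarrow> (\<lambda>\<omega>. X \<omega> j) \<in> borel_measurable M"
    and integrable_input_norm_sq: "integrable M (\<lambda>\<omega>. (vnorm (N 0) (X \<omega>))^2)"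
begin

abbreviation layer :: "nat \<Rightarrow> 'a \<Rightarrow> nat \<Rightarrow> real" where
  "layer \<equiv> scat M N W X"

definition layer_mean :: "nat \<Rightarrow> nat \<Rightarrow> real" where
  "layer_mean m j = integral\<^sup>L M (\<lambda>\<eta>. layer m \<eta> j)"

definition energy :: "nat \<Rightarrow> 'a \<Rightarrow> real" where
  "energy m \<omega> = (\<Sum>j<N m. (layer m \<omega> j)^2)"

definition mean_energy :: "nat \<Rightarrow> real" where
  "mean_energy m = (\<Sum>j<N m. (layer_mean m j)^2)"

definition input_sqdist :: "'a \<Rightarrow> 'a \<Rightarrow> real" where
  "input_sqdist \<omega> \<eta> = (\<Sum>j<N 0. (X \<omega> j - X \<eta> j)^2)"

lemma layer_Suc:
  "layer (Suc m) \<omega> i = (if i < N (Suc m)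
     then cmod (apply_lin (W (Suc m)) (N m) (\<lambda>j. layer m \<omega> j - layer_mean m j) i) else 0)"
  by (simp only: scat.simps layer_mean_def)

declare scat.simps(2)[simp del]

lemma layer_nonneg: "0 < m \<Longrightarrow> 0 \<le> layer m \<omega> i"
  by (cases m) (simp_all add: layer_Suc)

lemma energy_nonneg: "0 \<le> energy m \<omega>"
  unfolding energy_def by (intro sum_nonneg) auto

lemma energy_0: "energy 0 \<omega> = (vnorm (N 0) (X \<omega>))^2"
  by (simp add: energy_def vnorm_def sum_nonneg)

lemma layer_sq_le_energy: "j < N m \<Longrightarrow> (layer m \<omega> j)^2 \<le> energy m \<omega>"
  unfolding energy_def by (rule member_le_sum) auto

lemma energy_Suc: "energy (Suc m) \<omega> = (\<Sum>j<N m. (layer m \<omega> j - layer_mean m j)^2)"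
proof -
  have "energy (Suc m) \<omega> = (\<Sum>i<N (Suc m).
      (cmod (apply_lin (W (Suc m)) (N m) (\<lambda>j. layer m \<omega> j - layer_mean m j) i))^2)"
    unfolding energy_def by (intro sum.cong) (auto simp: layer_Suc)
  also have "\<dots> = (\<Sum>j<N m. (layer m \<omega> j - layer_mean m j)^2)"
    by (rule sum_cmod_apply_lin_sq[OF isometry])
  finally show ?thesis .
qed

lemma energy_Suc_expand:
  "energy (Suc m) \<omega> = energy m \<omega> - 2 * (\<Sum>j<N m. layer_mean m j * layer m \<omega> j) + mean_energy m"
  unfolding energy_Suc unfolding energy_def mean_energy_def
  by (simp add: power2_diff sum.distrib sum_subtractf sum_distrib_left mult_ac)

lemma layer_sqdist_le_input_sqdist:
  "(\<Sum>j<N m. (layer m \<omega> j - layer m \<eta> j)^2) \<le> input_sqdist \<omega> \<eta>"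
proof (induction m)
  case (Suc m)
  let ?A = "apply_lin (W (Suc m)) (N m)"
  have "(\<Sum>i<N (Suc m). (layer (Suc m) \<omega> i - layer (Suc m) \<eta> i)^2)
      = (\<Sum>i<N (Suc m). (cmod (?A (\<lambda>j. layer m \<omega> j - layer_mean m j) i)
                         - cmod (?A (\<lambda>j. layer m \<eta> j - layer_mean m j) i))^2)"
    by (intro sum.cong) (auto simp: layer_Suc)
  also have "\<dots> \<le> (\<Sum>j<N m. ((layer m \<omega> j - layer_mean m j) - (layer m \<eta> j - layer_mean m j))^2)"
    by (rule sum_sq_diff_cmod_apply_lin_le[OF isometry])
  also have "\<dots> \<le> input_sqdist \<omega> \<eta>"
    using Suc by simp
  finally show ?case .
qed (simp add: input_sqdist_def)

lemma borel_measurable_layer: "i < N m \<Longrightarrow> (\<lambda>\<omega>. layer m \<omega> i) \<in> borel_measurable M"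
proof (induction m arbitrary: i)
  case (Suc m i)
  have "(\<lambda>\<omega>. \<Sum>k<N m. W (Suc m) i k * complex_of_real (layer m \<omega> k - layer_mean m k))
      \<in> borel_measurable M"
  proof (rule borel_measurable_sum)
    fix k assume "k \<in> {..<N m}"
    then have [measurable]: "(\<lambda>\<omega>. layer m \<omega> k) \<in> borel_measurable M"
      using Suc.IH by simp
    show "(\<lambda>\<omega>. W (Suc m) i k * complex_of_real (layer m \<omega> k - layer_mean m k)) \<in> borel_measurable M"
      by measurable
  qed
  then show ?case
    using Suc.prems by (simp add: layer_Suc apply_lin_def)
qed (simp add: borel_measurable_input)

lemma borel_measurable_energy: "energy m \<in> borel_measurable M"
  unfolding energy_def[abs_def] by (intro borel_measurable_sum borel_measurable_power borel_measurable_layer) auto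

lemma integrable_layer:
  assumes energy: "integrable M (energy m)" and j: "j < N m"
  shows "integrable M (\<lambda>\<omega>. layer m \<omega> j)"
proof (rule square_integrable_imp_integrable)
  show measurable: "(\<lambda>\<omega>. layer m \<omega> j) \<in> borel_measurable M"
    using j by (rule borel_measurable_layer)
  show "integrable M (\<lambda>\<omega>. (layer m \<omega> j)^2)"
  proof (rule Bochner_Integration.integrable_bound[OF energy])
    show "(\<lambda>\<omega>. (layer m \<omega> j)^2) \<in> borel_measurable M"
      using measurable by simp
    show "AE \<omega> in M. norm ((layer m \<omega> j)^2) \<le> norm (energy m \<omega>)"
      using layer_sq_le_energy[OF j] energy_nonneg by (intro AE_I2) simp
  qed
qed

lemma integrable_energy: "integrable M (energy m)"
proof (induction m)
  case 0
  then show ?case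
    using integrable_input_norm_sq by (simp add: energy_0[abs_def])
next
  case (Suc m)
  then have "integrable M (\<lambda>\<omega>. layer m \<omega> j)" if "j < N m" for j
    using that by (rule integrable_layer)
  then show ?case
    unfolding energy_Suc_expand[abs_def] using Suc
    by (intro Bochner_Integration.integrable_add Bochner_Integration.integrable_diff
        Bochner_Integration.integrable_sum integrable_mult_right) auto
qed

lemma integral_energy_Suc: "integral\<^sup>L M (energy (Suc m)) = integral\<^sup>L M (energy m) - mean_energy m"
proof -
  have integrable: "integrable M (\<lambda>\<omega>. layer m \<omega> j)" if "j < N m" for j
    using integrable_energy that by (rule integrable_layer)
  define cross where "cross \<omega> = (\<Sum>j<N m. layer_mean m j * layer m \<omega> j)" for \<omega>
  have "integrable M cross"
    unfolding cross_def using integrable by auto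
  moreover have "integral\<^sup>L M cross = mean_energy m"
    unfolding cross_def using integrable
    by (simp add: Bochner_Integration.integral_sum mean_energy_def layer_mean_def power2_eq_square)
  ultimately show ?thesis
    unfolding energy_Suc_expand[abs_def] cross_def[symmetric]
    using integrable_energy by (simp add: prob_space)
qed

lemma mean_energy_nonneg: "0 \<le> mean_energy m"
  unfolding mean_energy_def by (intro sum_nonneg) auto

lemma summable_mean_energy: "summable mean_energy"
proof (rule summableI_nonneg_bounded)
  show "0 \<le> mean_energy m" for m
    by (rule mean_energy_nonneg)
  fix n
  have "integral\<^sup>L M (energy n) = integral\<^sup>L M (energy 0) - (\<Sum>k<n. mean_energy k)"
  proof (induction n)
    case (Suc n)
    then show ?case
      unfolding sum.lessThan_Suc using integral_energy_Suc[of n] by linarith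
  qed simp
  moreover have "0 \<le> integral\<^sup>L M (energy n)"
    by (simp add: energy_nonneg)
  ultimately show "(\<Sum>k<n. mean_energy k) \<le> integral\<^sup>L M (energy 0)"
    by linarith
qed

lemma sets_input_ball: "{\<eta>\<in>space M. input_sqdist \<omega> \<eta> \<le> e} \<in> sets M"
  unfolding input_sqdist_def using borel_measurable_input by measurable

lemma energy_Suc_le:
  assumes "0 < m"
  shows "energy (Suc m) \<omega>
    \<le> energy m \<omega> - prob {\<eta>\<in>space M. input_sqdist \<omega> \<eta> \<le> e} * max (energy m \<omega> - e) 0 + mean_energy m"
proof -
  define S where "S = {\<eta>\<in>space M. input_sqdist \<omega> \<eta> \<le> e}"
  define G where "G \<eta> = (\<Sum>j<N m. 2 * layer m \<omega> j * layer m \<eta> j)" for \<eta>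
  have integrable: "integrable M (\<lambda>\<eta>. layer m \<eta> j)" if "j < N m" for j
    using integrable_energy that by (rule integrable_layer)
  have S: "S \<in> sets M" "S \<inter> space M = S"
    using sets_input_ball by (auto simp: S_def)
  have G_ge: "max (energy m \<omega> - e) 0 * indicator S \<eta> \<le> G \<eta>" for \<eta>
  proof -
    have "0 \<le> G \<eta>"
      unfolding G_def using assms by (intro sum_nonneg mult_nonneg_nonneg layer_nonneg) auto
    moreover have "G \<eta> = energy m \<omega> + energy m \<eta> - (\<Sum>j<N m. (layer m \<omega> j - layer m \<eta> j)^2)"
      unfolding G_def energy_def
      by (simp add: power2_diff sum.distrib sum_subtractf sum_distrib_left mult_ac)
    then have "energy m \<omega> - input_sqdist \<omega> \<eta> \<le> G \<eta>"
      using layer_sqdist_le_input_sqdist[of m \<omega> \<eta>] energy_nonneg[of m \<eta>] by linarith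
    ultimately show ?thesis
      by (cases "\<eta> \<in> S") (auto simp: S_def)
  qed
  have "max (energy m \<omega> - e) 0 * prob S = integral\<^sup>L M (\<lambda>\<eta>. max (energy m \<omega> - e) 0 * indicator S \<eta>)"
    using S by simp
  also have "\<dots> \<le> integral\<^sup>L M G"
    using S(1) integrable G_ge unfolding G_def
    by (intro integral_mono integrable_mult_right integrable_real_indicator)
      (auto simp: less_top[symmetric])
  also have "\<dots> = 2 * (\<Sum>j<N m. layer_mean m j * layer m \<omega> j)"
    unfolding G_def using integrable
    by (simp add: Bochner_Integration.integral_sum layer_mean_def sum_distrib_left mult_ac)
  finally show ?thesis
    unfolding S_def energy_Suc_expand by (simp add: mult.commute)
qed

lemma energy_tendsto_zero:
  assumes ball_pos: "\<And>e. e > 0 \<Longrightarrow> prob {\<eta>\<in>space M. input_sqdist \<omega> \<eta> \<le> e} > 0"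
  shows "(\<lambda>m. energy m \<omega>) \<longlonglongrightarrow> 0"
proof (rule order_tendstoI)
  show "eventually (\<lambda>m. a < energy m \<omega>) sequentially" if "a < 0" for a
    using that energy_nonneg by (intro always_eventually allI) (rule less_le_trans)
  fix r :: real assume r: "0 < r"
  define e where "e = r / 2"
  define p where "p = prob {\<eta>\<in>space M. input_sqdist \<omega> \<eta> \<le> e}"
  define v where "v m = max (energy m \<omega> - e) 0" for m
  have "0 < e"
    using r by (simp add: e_def)
  then have p: "0 < p" "p \<le> 1"
    using ball_pos unfolding p_def by auto
  have contraction: "v (Suc m) \<le> (1 - p) * v m + mean_energy m" if "0 < m" for m
  proof -
    have "energy (Suc m) \<omega> - e \<le> (1 - p) * v m + mean_energy m"
    proof (cases "energy m \<omega> \<le> e")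
      case True
      then show ?thesis
        using energy_Suc_le[OF that, of \<omega> e] p mean_energy_nonneg[of m]
        unfolding v_def p_def[symmetric] by simp
    next
      case False
      then show ?thesis
        using energy_Suc_le[OF that, of \<omega> e]
        unfolding v_def p_def[symmetric] by (simp add: algebra_simps)
    qed
    moreover have "0 \<le> (1 - p) * v m"
      using p by (simp add: v_def)
    ultimately show ?thesis
      using mean_energy_nonneg[of m] unfolding v_def[of "Suc m"] max.bounded_iff by linarith
  qed
  have "eventually (\<lambda>m. v (Suc m) \<le> (1 - p) * v m + mean_energy m) sequentially"
    using eventually_gt_at_top[of 0] by eventually_elim (rule contraction)
  moreover have "0 \<le> v m" for m
    by (simp add: v_def)
  ultimately have "v \<longlonglongrightarrow> 0"
    using tendsto_zero_of_perturbed_contraction summable_mean_energy[THEN summable_LIMSEQ_zero] p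
    by blast
  then have "eventually (\<lambda>m. v m < e) sequentially"
    using r by (intro order_tendstoD) (auto simp: e_def)
  then show "eventually (\<lambda>m. energy m \<omega> < r) sequentially"
    unfolding v_def max_less_iff_conj e_def by eventually_elim linarith
qed

lemma energy_Suc_le_add: "0 < m \<Longrightarrow> energy (Suc m) \<omega> \<le> energy m \<omega> + mean_energy m"
  using energy_Suc_le[of m \<omega> 0] measure_nonneg[of M] by (smt (verit) max.cobounded2 mult_nonneg_nonneg)

lemma energy_le_of_input_norm_le:
  assumes "vnorm (N 0) (X \<omega>) \<le> B"
  shows "energy m \<omega> \<le> 2 * B^2 + 2 * mean_energy 0 + suminf mean_energy"
proof -
  have "0 \<le> vnorm (N 0) (X \<omega>)"
    by (simp add: vnorm_def sum_nonneg)
  then have energy_0_le: "energy 0 \<omega> \<le> B^2"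
    unfolding energy_0 using assms by (intro power_mono)
  have "energy 1 \<omega> = (\<Sum>j<N 0. (layer 0 \<omega> j - layer_mean 0 j)^2)"
    using energy_Suc[of 0 \<omega>] by simp
  also have "\<dots> \<le> (\<Sum>j<N 0. 2 * (layer 0 \<omega> j)^2 + 2 * (layer_mean 0 j)^2)"
    by (intro sum_mono diff_square_le)
  also have "\<dots> = 2 * energy 0 \<omega> + 2 * mean_energy 0"
    by (simp add: energy_def mean_energy_def sum.distrib sum_distrib_left)
  finally have energy_1_le: "energy 1 \<omega> \<le> 2 * energy 0 \<omega> + 2 * mean_energy 0" .
  have energy_Suc_le_partial: "energy (Suc m) \<omega> \<le> energy 1 \<omega> + (\<Sum>k<m. mean_energy (Suc k))" for m
  proof (induction m)
    case (Suc m)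
    then show ?case
      using energy_Suc_le_add[of "Suc m" \<omega>] by simp
  qed simp
  have partial_le: "(\<Sum>k<m. mean_energy (Suc k)) \<le> suminf mean_energy" for m
    using summable_mean_energy mean_energy_nonneg sum_le_suminf[of mean_energy "Suc ` {..<m}"]
    by (simp add: sum.reindex)
  have nonneg: "0 \<le> B^2" "0 \<le> mean_energy 0" "0 \<le> suminf mean_energy"
    using mean_energy_nonneg summable_mean_energy by (auto intro: suminf_nonneg)
  show ?thesis
  proof (cases m)
    case 0
    show ?thesis
      unfolding \<open>m = 0\<close> using energy_0_le nonneg by linarith
  next
    case (Suc k)
    then show ?thesis
      using energy_0_le energy_1_le energy_Suc_le_partial[of k] partial_le[of k] by simp
  qed
qed

lemma integral_layer_norm_on_ball_tendsto_zero:
  "(\<lambda>m. integral\<^sup>L M (\<lambda>\<omega>. vnorm (N m) (layer m \<omega>) * indicator {\<eta>. vnorm (N 0) (X \<eta>) \<le> B} \<omega>))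
    \<longlonglongrightarrow> 0"
proof -
  define A where "A = {\<eta>. vnorm (N 0) (X \<eta>) \<le> B}"
  define K where "K = 2 * B^2 + 2 * mean_energy 0 + suminf mean_energy"
  have norm_eq: "vnorm (N m) (layer m \<omega>) = sqrt (energy m \<omega>)" for m \<omega>
    by (simp add: vnorm_def energy_def)
  have [measurable]: "energy m \<in> borel_measurable M" for m
    by (rule borel_measurable_energy)
  have "A \<inter> space M = {\<omega>\<in>space M. sqrt (energy 0 \<omega>) \<le> B}"
    by (auto simp: A_def norm_eq[symmetric])
  also have "\<dots> \<in> sets M"
    by measurable
  finally have [measurable]: "(indicator A :: 'a \<Rightarrow> real) \<in> borel_measurable M"
    by (simp add: borel_measurable_indicator_iff)
  have "AE \<omega> in M. \<forall>e>0. prob {\<eta>\<in>space M. input_sqdist \<omega> \<eta> \<le> e} > 0"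
    unfolding input_sqdist_def using borel_measurable_input by (rule AE_prob_sqdist_le_pos)
  then have "AE \<omega> in M. (\<lambda>m. sqrt (energy m \<omega>) * indicator A \<omega>) \<longlonglongrightarrow> sqrt 0 * indicator A \<omega>"
    by eventually_elim (intro tendsto_mult tendsto_real_sqrt tendsto_const energy_tendsto_zero, auto)
  moreover have "0 \<le> K"
    using mean_energy_nonneg[of 0] suminf_nonneg[OF summable_mean_energy mean_energy_nonneg]
    unfolding K_def by simp
  then have "AE \<omega> in M. norm (sqrt (energy m \<omega>) * indicator A \<omega>) \<le> sqrt K" for m
    using energy_le_of_input_norm_le[of _ B m] energy_nonneg[of m]
    by (intro AE_I2) (auto simp: A_def K_def indicator_def)
  ultimately have "(\<lambda>m. integral\<^sup>L M (\<lambda>\<omega>. sqrt (energy m \<omega>) * indicator A \<omega>)) \<longlonglongrightarrow> integral\<^sup>L M (\<lambda>\<omega>. 0)"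
    by (intro integral_dominated_convergence[where w = "\<lambda>_. sqrt K"]) auto
  then show ?thesis
    by (simp add: norm_eq A_def)
qed

end

theorem mainTheorem2:
  fixes M :: "'a measure" and N :: "nat \<Rightarrow> nat" and W :: "nat \<Rightarrow> nat \<Rightarrow> nat \<Rightarrow> complex"
    and X :: "'a \<Rightarrow> nat \<Rightarrow> real" and B :: real
  assumes "prob_space M"
    and "\<forall>m. N m > 0"
    and "\<forall>m\<ge>1. \<forall>x j. j < N (m - 1) \<longrightarrow>
            adj_lin (W m) (N m) (apply_lin (W m) (N (m - 1)) x) j = x j"
    and "\<forall>j<N 0. (\<lambda>\<omega>. X \<omega> j) \<in> borel_measurable M"
    and "integrable M (\<lambda>\<omega>. (vnorm (N 0) (X \<omega>))^2)"
    and "B > 0"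
  shows "(\<lambda>m. integral\<^sup>L M (\<lambda>\<omega>. vnorm (N m) (scat M N W X m \<omega>)
              * indicator {\<eta>. vnorm (N 0) (X \<eta>) \<le> B} \<omega>)) \<longlonglongrightarrow> 0"
proof -
  interpret expected_scattering M N W X
  proof (intro expected_scattering.intro expected_scattering_axioms.intro)
    show "adj_lin (W (Suc m)) (N (Suc m)) (apply_lin (W (Suc m)) (N m) x) j = x j"
      if "j < N m" for m x j
      using assms(3) that by (metis diff_Suc_1 le_add1 plus_1_eq_Suc)
  qed (use assms in auto)
  show ?thesis
    by (rule integral_layer_norm_on_ball_tendsto_zero)
qed

end
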